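(* Let $\mathcal{D}_{ES}=\{(\alpha,\kappa):0<\alpha<1,\ \kappa>0\}$ and $\mathcal{D}_{LS}=\{(\mathbb{W},\hat\kappa):\mathbb{W}\in\mathbb{R},\ \hat\kappa>0\}$, and define $\mathcal{H}^*_{ES}=\{\mathcal{P}^*_0:\mathcal{P}^*_0 \text{ solves } \text{EW-ES}_{t_0}(\alpha,\kappa)\text{ for some }(\alpha,\kappa)\in\mathcal{D}_{ES}\}$ and $\mathcal{H}^*_{LS}=\{\mathcal{P}^*_0:\mathcal{P}^*_0 \text{ solves } \text{EW-LS}_{t_0}(\mathbb{W},\hat\kappa)\text{ for some }(\mathbb{W},\hat\kappa)\in\mathcal{D}_{LS}\}$. Then $\mathcal{H}^*_{ES}\subseteq\mathcal{H}^*_{LS}$.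
   Context: Decumulation problem on horizon $[0,T]$. Two assets: a stock index and a bond index; $S_t$, $B_t$ denote the real amounts invested, $W_t=S_t+B_t$. Between rebalancing times they evolve without control as jump diffusions $\frac{dS_t}{S_{t^-}}=(\mu^s-\lambda^s\gamma^s)dt+\sigma^s dZ^s+d\big(\sum_{i=1}^{\pi^s_t}(\xi^s_i-1)\big)$, $\frac{dB_t}{B_{t^-}}=(\mu^b-\lambda^b\gamma^b+\mu^b_c\mathbf 1_{\{B_{t^-}<0\}})dt+\sigma^b dZ^b+d\big(\sum_{i=1}^{\pi^b_t}(\xi^b_i-1)\big)$, where $\pi^s,\pi^b$ are Poisson processes with intensities $\lambda^s,\lambda^b$, $\log\xi^{s},\log\xi^b$ are i.i.d. double-exponential jump sizes, $\gamma^{s}=E[\xi^s-1]$, $\gamma^b=E[\xi^b-1]$, $dZ^s dZ^b=\rho_{sb}dt$, and the jump processes are independent of each other and of the Brownian motions. Rebalancing times $t_0=0<t_1<\dots<t_M=T$, equally spaced. At each $t_i$ the investor withdraws $\mathfrak{q}_i$, so $W(t_i^+)=W(t_i^-)-\mathfrak{q}_i$, then sets $S(t_i^+)=\mathfrak{p}_iW(t_i^+)$, $B(t_i^+)=(1-\mathfrak{p}_i)W(t_i^+)$. Controls $(\mathfrak{q}_i,\mathfrak{p}_i)$ are feedback functions of the state $(S(t_i^-),B(t_i^-))$ and $t_i$. Admissibility: for $i<M$, $\mathfrak{q}_i\in[\mathfrak{q}_{\min},\mathfrak{q}_{\max}]$ if $W_i^-\ge\mathfrak{q}_{\max}$ and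 $\mathfrak{q}_i\in[\mathfrak{q}_{\min},\max(\mathfrak{q}_{\min},W_i^-)]$ if $W_i^-<\mathfrak{q}_{\max}$; $\mathfrak{q}_M=0$; $\mathfrak{p}_i\in[0,1]$ if $W_i^+>0$ and $i<M$, $\mathfrak{p}_i=0$ if $W_i^+\le 0$ or $i=M$. $\mathcal{A}$ is the set of admissible controls $\mathcal{P}_0=\{(\mathfrak{q}_i,\mathfrak{p}_i)\}_{i=0}^M$. $E_{\mathcal{P}_0}^{(s,b),t_0^-}$ is expectation under control $\mathcal{P}_0$ given initial state $(S(t_0^-),B(t_0^-))=(s,b)$; $W_T$ is terminal wealth; $\epsilon$ is a fixed real stabilization constant. $\text{EW-LS}_{t_0}(\mathbb{W},\hat\kappa)$: $\sup_{\mathcal{P}_0\in\mathcal{A}} E_{\mathcal{P}_0}^{(s,b),t_0^-}\big[\sum_{i=0}^M\mathfrak{q}_i+\hat\kappa\min(W_T-\mathbb{W},0)+\epsilon W_T\big]$. $\text{EW-ES}_{t_0}(\alpha,\kappa)$: $\sup_{\mathcal{P}_0\in\mathcal{A}} E_{\mathcal{P}_0}^{(s,b),t_0^-}\big[\sum_{i=0}^M\mathfrak{q}_i+\kappa\sup_{W'}\big(W'+\tfrac1\alpha\min(W_T-W',0)\big)+\epsilon W_T\big]$, equivalently $\sup_{W'}\sup_{\mathcal{P}_0}E[\sum\mathfrak{q}_i+\kappa(W'+\tfrac1\alpha\min(W_T-W',0))+\epsilon W_T]$; for each $(\alpha,\kappa)$ the maximizing $W'$ (denoted $\mathbb{W}^*$)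 is assumed to exist. *)

theory Defs
  imports "HOL-Probability.Probability"
begin

(* Abstract decumulation model: M is the underlying probability space (initial
   state (s,b) at t_0^- fixed), A the set of admissible controls, and for a control
   P the random variables  Qsum P = sum_{i=0}^M q_i  (total withdrawals) and
   WT P = terminal wealth W_T under control P. *)

definition EW_LS_obj ::
  "'w measure \<Rightarrow> ('c \<Rightarrow> 'w \<Rightarrow> real) \<Rightarrow> ('c \<Rightarrow> 'w \<Rightarrow> real) \<Rightarrow> real
   \<Rightarrow> real \<Rightarrow> real \<Rightarrow> 'c \<Rightarrow> real" where
  "EW_LS_obj M Qsum WT eps Wb kh P =
     (\<integral>\<omega>. Qsum P \<omega> + kh * min (WT P \<omega> - Wb) 0 + eps * WT P \<omega> \<partial>M)"

definition EW_ES_inner ::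
  "'w measure \<Rightarrow> ('c \<Rightarrow> 'w \<Rightarrow> real) \<Rightarrow> ('c \<Rightarrow> 'w \<Rightarrow> real) \<Rightarrow> real
   \<Rightarrow> real \<Rightarrow> real \<Rightarrow> real \<Rightarrow> 'c \<Rightarrow> real" where
  "EW_ES_inner M Qsum WT eps \<alpha> \<kappa> W' P =
     (\<integral>\<omega>. Qsum P \<omega> + \<kappa> * (W' + (1 / \<alpha>) * min (WT P \<omega> - W') 0) + eps * WT P \<omega> \<partial>M)"

definition EW_ES_obj ::
  "'w measure \<Rightarrow> ('c \<Rightarrow> 'w \<Rightarrow> real) \<Rightarrow> ('c \<Rightarrow> 'w \<Rightarrow> real) \<Rightarrow> real
   \<Rightarrow> real \<Rightarrow> real \<Rightarrow> 'c \<Rightarrow> real" where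
  "EW_ES_obj M Qsum WT eps \<alpha> \<kappa> P = (SUP W'. EW_ES_inner M Qsum WT eps \<alpha> \<kappa> W' P)"

definition solves :: "'c set \<Rightarrow> ('c \<Rightarrow> real) \<Rightarrow> 'c \<Rightarrow> bool" where
  "solves A J P \<longleftrightarrow> P \<in> A \<and> (\<forall>P'\<in>A. J P' \<le> J P)"

definition H_ES ::
  "'w measure \<Rightarrow> 'c set \<Rightarrow> ('c \<Rightarrow> 'w \<Rightarrow> real) \<Rightarrow> ('c \<Rightarrow> 'w \<Rightarrow> real) \<Rightarrow> real \<Rightarrow> 'c set" where
  "H_ES M A Qsum WT eps = {P. \<exists>\<alpha> \<kappa>. 0 < \<alpha> \<and> \<alpha> < 1 \<and> 0 < \<kappa> \<and>
                                   solves A (EW_ES_obj M Qsum WT eps \<alpha> \<kappa>) P}"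

definition H_LS ::
  "'w measure \<Rightarrow> 'c set \<Rightarrow> ('c \<Rightarrow> 'w \<Rightarrow> real) \<Rightarrow> ('c \<Rightarrow> 'w \<Rightarrow> real) \<Rightarrow> real \<Rightarrow> 'c set" where
  "H_LS M A Qsum WT eps = {P. \<exists>Wb kh. 0 < kh \<and> solves A (EW_LS_obj M Qsum WT eps Wb kh) P}"

end

theory Submission
  imports Defs
begin

(* Rockafellar-Uryasev. For a fixed control the inner EW-ES objective, as a function of the
   threshold w, equals kappa w + (kappa/alpha) E[min(W_T - w, 0)] + const. The shortfall term is
   1-Lipschitz, nonpositive and at most E[W_T] - w, so the function is continuous, lies below a
   line of slope kappa > 0 and below a line of slope kappa - kappa/alpha < 0, and hence attains its
   supremum. If P solves EW-ES(alpha, kappa) and w0 maximises its inner objective, then every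
   admissible P' satisfies  inner P' w0 <= ES P' <= ES P = inner P w0,  and
   inner Q w0 = LS(Q; w0, kappa/alpha) + kappa w0, so P solves EW-LS(w0, kappa/alpha). *)

lemma continuous_affinely_bounded_attains_max:
  fixes f :: "real \<Rightarrow> real"
  assumes cont: "continuous_on UNIV f"
    and left: "\<And>x. f x \<le> a + b * x" and "b > 0"
    and right: "\<And>x. f x \<le> c - d * x" and "d > 0"
  shows "\<exists>x0. \<forall>x. f x \<le> f x0"
proof -
  define lo where "lo = (f 0 - a) / b"
  define hi where "hi = (c - f 0) / d"
  have "lo \<le> 0" "0 \<le> hi"
    using left[of 0] right[of 0] \<open>b > 0\<close> \<open>d > 0\<close> unfolding lo_def hi_def
    by (simp_all add: divide_nonpos_pos divide_nonneg_pos)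
  then have "lo \<le> hi" by linarith
  have "\<exists>x0\<in>{lo..hi}. \<forall>x\<in>{lo..hi}. f x \<le> f x0"
    using \<open>lo \<le> hi\<close> by (intro continuous_attains_sup continuous_on_subset[OF cont]) auto
  then obtain x0 where max: "\<And>x. x \<in> {lo..hi} \<Longrightarrow> f x \<le> f x0"
    by blast
  have "f 0 \<le> f x0"
    using max \<open>lo \<le> 0\<close> \<open>0 \<le> hi\<close> by simp
  moreover have "f x \<le> f 0" if "x < lo \<or> hi < x" for x
  proof -
    have "a + b * x < f 0 \<or> c - d * x < f 0"
      using that \<open>b > 0\<close> \<open>d > 0\<close> unfolding lo_def hi_def
      by (auto simp: pos_less_divide_eq pos_divide_less_eq mult.commute)
    then show ?thesis using left[of x] right[of x] by linarith
  qed
  ultimately show ?thesis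
    using max by (metis atLeastAtMost_iff not_le order_trans)
qed

context prob_space
begin

lemma integral_min_shift_nonpos:
  fixes X :: "'a \<Rightarrow> real"
  assumes "integrable M X"
  shows "(\<integral>\<omega>. min (X \<omega> - w) 0 \<partial>M) \<le> 0"
proof -
  have "(\<integral>\<omega>. min (X \<omega> - w) 0 \<partial>M) \<le> (\<integral>\<omega>. 0 \<partial>M)"
    using assms by (intro integral_mono) auto
  then show ?thesis by simp
qed

lemma integral_min_shift_le:
  fixes X :: "'a \<Rightarrow> real"
  assumes "integrable M X"
  shows "(\<integral>\<omega>. min (X \<omega> - w) 0 \<partial>M) \<le> expectation X - w"
proof -
  have "(\<integral>\<omega>. min (X \<omega> - w) 0 \<partial>M) \<le> (\<integral>\<omega>. X \<omega> - w \<partial>M)"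
    using assms by (intro integral_mono) auto
  also have "\<dots> = expectation X - w"
    using assms by (simp add: prob_space)
  finally show ?thesis .
qed

lemma lipschitz_integral_min_shift:
  fixes X :: "'a \<Rightarrow> real"
  assumes "integrable M X"
  shows "1-lipschitz_on UNIV (\<lambda>w. \<integral>\<omega>. min (X \<omega> - w) 0 \<partial>M)"
proof (rule lipschitz_onI)
  fix x y :: real
  have "\<bar>(\<integral>\<omega>. min (X \<omega> - x) 0 \<partial>M) - (\<integral>\<omega>. min (X \<omega> - y) 0 \<partial>M)\<bar>
      = \<bar>\<integral>\<omega>. min (X \<omega> - x) 0 - min (X \<omega> - y) 0 \<partial>M\<bar>"
    using assms by simp
  also have "\<dots> \<le> (\<integral>\<omega>. \<bar>min (X \<omega> - x) 0 - min (X \<omega> - y) 0\<bar> \<partial>M)"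
    by (rule integral_abs_bound)
  also have "\<dots> \<le> (\<integral>\<omega>. \<bar>x - y\<bar> \<partial>M)"
    using assms by (intro integral_mono) auto
  also have "\<dots> = \<bar>x - y\<bar>"
    by (simp add: prob_space)
  finally show "dist (\<integral>\<omega>. min (X \<omega> - x) 0 \<partial>M) (\<integral>\<omega>. min (X \<omega> - y) 0 \<partial>M) \<le> 1 * dist x y"
    by (simp add: dist_real_def)
qed simp

lemma EW_LS_obj_eq:
  assumes "integrable M (Qsum P)" "integrable M (WT P)"
  shows "EW_LS_obj M Qsum WT eps w kh P
    = expectation (Qsum P) + eps * expectation (WT P) + kh * (\<integral>\<omega>. min (WT P \<omega> - w) 0 \<partial>M)"
  using assms unfolding EW_LS_obj_def by simp

lemma EW_ES_inner_eq_EW_LS_obj: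
  assumes "integrable M (Qsum P)" "integrable M (WT P)"
  shows "EW_ES_inner M Qsum WT eps \<alpha> \<kappa> w P = EW_LS_obj M Qsum WT eps w (\<kappa> / \<alpha>) P + \<kappa> * w"
proof -
  have "EW_ES_inner M Qsum WT eps \<alpha> \<kappa> w P
      = (\<integral>\<omega>. (Qsum P \<omega> + \<kappa> / \<alpha> * min (WT P \<omega> - w) 0 + eps * WT P \<omega>) + \<kappa> * w \<partial>M)"
    unfolding EW_ES_inner_def by (rule Bochner_Integration.integral_cong) (auto simp: algebra_simps)
  then show ?thesis
    using assms unfolding EW_LS_obj_def by (simp add: prob_space)
qed

lemma EW_ES_inner_attains_max:
  assumes "integrable M (Qsum P)" "integrable M (WT P)"
    and "0 < \<alpha>" "\<alpha> < 1" "0 < \<kappa>"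
  shows "\<exists>w0. \<forall>w. EW_ES_inner M Qsum WT eps \<alpha> \<kappa> w P \<le> EW_ES_inner M Qsum WT eps \<alpha> \<kappa> w0 P"
proof -
  define m where "m w = (\<integral>\<omega>. min (WT P \<omega> - w) 0 \<partial>M)" for w
  define c where "c = expectation (Qsum P) + eps * expectation (WT P)"
  have inner_eq: "EW_ES_inner M Qsum WT eps \<alpha> \<kappa> w P = c + \<kappa> * w + \<kappa> / \<alpha> * m w" for w
    unfolding EW_ES_inner_eq_EW_LS_obj[of Qsum P WT, OF assms(1,2)]
      EW_LS_obj_eq[of Qsum P WT, OF assms(1,2)] m_def c_def by simp
  have "\<kappa> / \<alpha> > 0" "\<kappa> / \<alpha> - \<kappa> > 0"
    using assms by (simp_all add: field_simps)
  show ?thesis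
    unfolding inner_eq
  proof (rule continuous_affinely_bounded_attains_max)
    show "continuous_on UNIV (\<lambda>w. c + \<kappa> * w + \<kappa> / \<alpha> * m w)"
      using lipschitz_on_continuous_on[OF lipschitz_integral_min_shift[OF assms(2)]]
      unfolding m_def[abs_def] by (intro continuous_intros)
    show "c + \<kappa> * w + \<kappa> / \<alpha> * m w \<le> c + \<kappa> * w" for w
    proof -
      have "\<kappa> / \<alpha> * m w \<le> 0"
        using \<open>\<kappa> / \<alpha> > 0\<close> integral_min_shift_nonpos[OF assms(2)] unfolding m_def
        by (intro mult_nonneg_nonpos) auto
      then show ?thesis by linarith
    qed
    show "c + \<kappa> * w + \<kappa> / \<alpha> * m w
        \<le> (c + \<kappa> / \<alpha> * expectation (WT P)) - (\<kappa> / \<alpha> - \<kappa>) * w" for w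
    proof -
      have "\<kappa> / \<alpha> * m w \<le> \<kappa> / \<alpha> * (expectation (WT P) - w)"
        using \<open>\<kappa> / \<alpha> > 0\<close> integral_min_shift_le[OF assms(2)] unfolding m_def
        by (intro mult_left_mono) auto
      then show ?thesis by (simp add: algebra_simps)
    qed
  qed (use \<open>0 < \<kappa>\<close> \<open>\<kappa> / \<alpha> - \<kappa> > 0\<close> in auto)
qed

lemma EW_ES_obj_eq_max:
  assumes "\<forall>w. EW_ES_inner M Qsum WT eps \<alpha> \<kappa> w P \<le> EW_ES_inner M Qsum WT eps \<alpha> \<kappa> w0 P"
  shows "EW_ES_obj M Qsum WT eps \<alpha> \<kappa> P = EW_ES_inner M Qsum WT eps \<alpha> \<kappa> w0 P"
  unfolding EW_ES_obj_def using assms by (intro cSup_eq_maximum) auto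

lemma solves_EW_ES_imp_solves_EW_LS:
  assumes integrable: "\<forall>P\<in>A. integrable M (Qsum P) \<and> integrable M (WT P)"
    and "0 < \<alpha>" "\<alpha> < 1" "0 < \<kappa>"
    and sol: "solves A (EW_ES_obj M Qsum WT eps \<alpha> \<kappa>) P"
  shows "\<exists>w. solves A (EW_LS_obj M Qsum WT eps w (\<kappa> / \<alpha>)) P"
proof -
  let ?inner = "\<lambda>P w. EW_ES_inner M Qsum WT eps \<alpha> \<kappa> w P"
  let ?ES = "EW_ES_obj M Qsum WT eps \<alpha> \<kappa>"
  let ?LS = "\<lambda>w. EW_LS_obj M Qsum WT eps w (\<kappa> / \<alpha>)"
  have "P \<in> A" and opt: "\<And>P'. P' \<in> A \<Longrightarrow> ?ES P' \<le> ?ES P"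
    using sol unfolding solves_def by auto
  have attains: "\<exists>w0. \<forall>w. ?inner P' w \<le> ?inner P' w0" if "P' \<in> A" for P'
    using integrable that by (intro EW_ES_inner_attains_max assms(2-4)) auto
  have inner_le_ES: "?inner P' w \<le> ?ES P'" if "P' \<in> A" for P' w
  proof -
    obtain w1 where w1: "\<forall>w. ?inner P' w \<le> ?inner P' w1"
      using attains \<open>P' \<in> A\<close> by blast
    show ?thesis
      using w1 EW_ES_obj_eq_max[OF w1] by simp
  qed
  obtain w0 where w0: "\<forall>w. ?inner P w \<le> ?inner P w0"
    using attains[OF \<open>P \<in> A\<close>] by blast
  have "?LS w0 P' \<le> ?LS w0 P" if "P' \<in> A" for P'
  proof -
    have "?inner P' w0 \<le> ?ES P'"
      using inner_le_ES[OF that] .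
    also have "\<dots> \<le> ?ES P"
      using opt[OF that] .
    also have "\<dots> = ?inner P w0"
      using EW_ES_obj_eq_max[OF w0] .
    finally show ?thesis
      using that \<open>P \<in> A\<close> integrable by (simp add: EW_ES_inner_eq_EW_LS_obj)
  qed
  then have "solves A (?LS w0) P"
    using \<open>P \<in> A\<close> unfolding solves_def by blast
  then show ?thesis ..
qed

end

theorem corollary1:
  fixes M :: "'w measure" and A :: "'c set"
    and Qsum WT :: "'c \<Rightarrow> 'w \<Rightarrow> real" and eps :: real
  assumes "prob_space M"
    and "\<forall>P\<in>A. integrable M (Qsum P) \<and> integrable M (WT P)"
    and "\<forall>\<alpha> \<kappa>. 0 < \<alpha> \<and> \<alpha> < 1 \<and> 0 < \<kappa> \<longrightarrow>
           (\<exists>Wst. \<forall>W'. (SUP P\<in>A. EW_ES_inner M Qsum WT eps \<alpha> \<kappa> W' P)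
                        \<le> (SUP P\<in>A. EW_ES_inner M Qsum WT eps \<alpha> \<kappa> Wst P))"
  shows "H_ES M A Qsum WT eps \<subseteq> H_LS M A Qsum WT eps"
proof
  fix P assume "P \<in> H_ES M A Qsum WT eps"
  then obtain \<alpha> \<kappa> where "0 < \<alpha>" "\<alpha> < 1" "0 < \<kappa>"
    and "solves A (EW_ES_obj M Qsum WT eps \<alpha> \<kappa>) P"
    unfolding H_ES_def by blast
  then obtain w where "solves A (EW_LS_obj M Qsum WT eps w (\<kappa> / \<alpha>)) P"
    using prob_space.solves_EW_ES_imp_solves_EW_LS[OF assms(1,2)] by blast
  moreover have "0 < \<kappa> / \<alpha>"
    using \<open>0 < \<alpha>\<close> \<open>0 < \<kappa>\<close> by simp
  ultimately show "P \<in> H_LS M A Qsum WT eps"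
    unfolding H_LS_def by blast
qed

end
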